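(* Let $\sigma$ be a signature containing $\triangleright$ and let $\mathcal{A}$ be a $\sigma$-algebra. If $\mathcal{A}$ has a meet-complete representation by partial functions, then the atoms of $\mathcal{A}$ are separating: whenever $a \not\le b$ in $\mathcal{A}$ there is an atom $c$ of $\mathcal{A}$ with $c \le a$ and $c \not\le b$. In particular, $\mathcal{A}$ is atomic (every nonzero element lies above some atom).
   Context: Signatures $\sigma$ are sets of operation symbols drawn from: $\triangleright$ (antidomain restriction), $;$ (composition), $\wedge$ (intersection), $\mathrm{upd}$ (update), $\sqcup$ (preferential union), $\mathsf{D}$ (domain), $\mathsf{A}$ (antidomain), interpreted on partial functions as: $f \triangleright g = \{(x,y) \in g : x \notin \mathrm{dom}(f)\}$; $f;g$ = relational composition ($f$ first); $f\wedge g = f\cap g$; $\mathrm{upd}(f,g)(x)$ is $f(x)$ if $f(x)$ defined and $g(x)$ undefined, $g(x)$ if both defined, undefined otherwise; $(f\sqcup g)(x)$ is $f(x)$ if defined, else $g(x)$; $\mathsf{D}(f)$ = identity on $\mathrm{dom}(f)$; $\mathsf{A}(f)$ = identity on the complement of $\mathrm{dom}(f)$ in the base. A representation by partial functions is an isomorphism onto a $\sigma$-algebra of partial functions with these operations. Define $0 := a\triangleright a$, $a\lhd b := (a\triangleright b)\triangleright b$, $a \le b :\iff a\lhd b = a$; for representable algebras this is a partial order with least element $0$ and $a\le b\iff\theta(a)\subseteq\theta(b)$. An atom is a minimal nonzero element. A representation $\theta$ is meet complete if for every nonempty $S$ with $\bigwedge S$ existing in $(\mathcal{A},\le)$, $\theta(\bigwedge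 S)=\bigcap\theta[S]$. *)

theory Defs
  imports Main
begin

datatype opsym = ARestr | Comp | Meet | Upd | Pref | Dom | Antidom

text \<open>An algebra with (interpretations of) all operation symbols; only those in the
  signature sigma are relevant.\<close>
record 'a salg =
  carrier :: "'a set"
  ar :: "'a \<Rightarrow> 'a \<Rightarrow> 'a"
  cmp :: "'a \<Rightarrow> 'a \<Rightarrow> 'a"
  mt :: "'a \<Rightarrow> 'a \<Rightarrow> 'a"
  up :: "'a \<Rightarrow> 'a \<Rightarrow> 'a"
  pu :: "'a \<Rightarrow> 'a \<Rightarrow> 'a"
  dm :: "'a \<Rightarrow> 'a"
  adm :: "'a \<Rightarrow> 'a"

definition sigma_algebra :: "opsym set \<Rightarrow> 'a salg \<Rightarrow> bool" where
  "sigma_algebra \<sigma> A \<longleftrightarrow>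
     (ARestr \<in> \<sigma> \<longrightarrow> (\<forall>a\<in>carrier A. \<forall>b\<in>carrier A. ar A a b \<in> carrier A)) \<and>
     (Comp \<in> \<sigma> \<longrightarrow> (\<forall>a\<in>carrier A. \<forall>b\<in>carrier A. cmp A a b \<in> carrier A)) \<and>
     (Meet \<in> \<sigma> \<longrightarrow> (\<forall>a\<in>carrier A. \<forall>b\<in>carrier A. mt A a b \<in> carrier A)) \<and>
     (Upd \<in> \<sigma> \<longrightarrow> (\<forall>a\<in>carrier A. \<forall>b\<in>carrier A. up A a b \<in> carrier A)) \<and>
     (Pref \<in> \<sigma> \<longrightarrow> (\<forall>a\<in>carrier A. \<forall>b\<in>carrier A. pu A a b \<in> carrier A)) \<and>
     (Dom \<in> \<sigma> \<longrightarrow> (\<forall>a\<in>carrier A. dm A a \<in> carrier A)) \<and>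
     (Antidom \<in> \<sigma> \<longrightarrow> (\<forall>a\<in>carrier A. adm A a \<in> carrier A))"

definition pf_ar :: "('b \<times> 'b) set \<Rightarrow> ('b \<times> 'b) set \<Rightarrow> ('b \<times> 'b) set" where
  "pf_ar f g = {(x, y) \<in> g. x \<notin> Domain f}"

definition pf_upd :: "('b \<times> 'b) set \<Rightarrow> ('b \<times> 'b) set \<Rightarrow> ('b \<times> 'b) set" where
  "pf_upd f g = {(x, y) \<in> f. x \<notin> Domain g} \<union> {(x, y) \<in> g. x \<in> Domain f}"

definition pf_pref :: "('b \<times> 'b) set \<Rightarrow> ('b \<times> 'b) set \<Rightarrow> ('b \<times> 'b) set" where
  "pf_pref f g = f \<union> {(x, y) \<in> g. x \<notin> Domain f}"

definition pf_dom :: "('b \<times> 'b) set \<Rightarrow> ('b \<times> 'b) set" where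
  "pf_dom f = Id_on (Domain f)"

definition pf_antidom :: "'b set \<Rightarrow> ('b \<times> 'b) set \<Rightarrow> ('b \<times> 'b) set" where
  "pf_antidom X f = Id_on (X - Domain f)"

definition is_pfun_on :: "'b set \<Rightarrow> ('b \<times> 'b) set \<Rightarrow> bool" where
  "is_pfun_on X f \<longleftrightarrow> f \<subseteq> X \<times> X \<and> single_valued f"

definition pfun_rep :: "opsym set \<Rightarrow> 'a salg \<Rightarrow> 'b set \<Rightarrow> ('a \<Rightarrow> ('b \<times> 'b) set) \<Rightarrow> bool" where
  "pfun_rep \<sigma> A X \<theta> \<longleftrightarrow>
     inj_on \<theta> (carrier A) \<and>
     (\<forall>a\<in>carrier A. is_pfun_on X (\<theta> a)) \<and>
     (ARestr \<in> \<sigma> \<longrightarrow> (\<forall>a\<in>carrier A. \<forall>b\<in>carrier A. \<theta> (ar A a b) = pf_ar (\<theta> a) (\<theta> b))) \<and>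
     (Comp \<in> \<sigma> \<longrightarrow> (\<forall>a\<in>carrier A. \<forall>b\<in>carrier A. \<theta> (cmp A a b) = \<theta> a O \<theta> b)) \<and>
     (Meet \<in> \<sigma> \<longrightarrow> (\<forall>a\<in>carrier A. \<forall>b\<in>carrier A. \<theta> (mt A a b) = \<theta> a \<inter> \<theta> b)) \<and>
     (Upd \<in> \<sigma> \<longrightarrow> (\<forall>a\<in>carrier A. \<forall>b\<in>carrier A. \<theta> (up A a b) = pf_upd (\<theta> a) (\<theta> b))) \<and>
     (Pref \<in> \<sigma> \<longrightarrow> (\<forall>a\<in>carrier A. \<forall>b\<in>carrier A. \<theta> (pu A a b) = pf_pref (\<theta> a) (\<theta> b))) \<and>
     (Dom \<in> \<sigma> \<longrightarrow> (\<forall>a\<in>carrier A. \<theta> (dm A a) = pf_dom (\<theta> a))) \<and>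
     (Antidom \<in> \<sigma> \<longrightarrow> (\<forall>a\<in>carrier A. \<theta> (adm A a) = pf_antidom X (\<theta> a)))"

definition alg_zero :: "'a salg \<Rightarrow> 'a" where
  "alg_zero A = (let a = (SOME a. a \<in> carrier A) in ar A a a)"

definition alg_lhd :: "'a salg \<Rightarrow> 'a \<Rightarrow> 'a \<Rightarrow> 'a" where
  "alg_lhd A a b = ar A (ar A a b) b"

definition alg_le :: "'a salg \<Rightarrow> 'a \<Rightarrow> 'a \<Rightarrow> bool" where
  "alg_le A a b \<longleftrightarrow> alg_lhd A a b = a"

definition is_atom :: "'a salg \<Rightarrow> 'a \<Rightarrow> bool" where
  "is_atom A c \<longleftrightarrow> c \<in> carrier A \<and> c \<noteq> alg_zero A \<and>
     (\<forall>d\<in>carrier A. alg_le A d c \<longrightarrow> d = alg_zero A \<or> d = c)"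

definition is_glb :: "'a salg \<Rightarrow> 'a set \<Rightarrow> 'a \<Rightarrow> bool" where
  "is_glb A S m \<longleftrightarrow> m \<in> carrier A \<and> (\<forall>s\<in>S. alg_le A m s) \<and>
     (\<forall>l\<in>carrier A. (\<forall>s\<in>S. alg_le A l s) \<longrightarrow> alg_le A l m)"

definition meet_complete :: "'a salg \<Rightarrow> ('a \<Rightarrow> ('b \<times> 'b) set) \<Rightarrow> bool" where
  "meet_complete A \<theta> \<longleftrightarrow>
     (\<forall>S m. S \<noteq> {} \<and> S \<subseteq> carrier A \<and> is_glb A S m \<longrightarrow> \<theta> m = (\<Inter>s\<in>S. \<theta> s))"

end

theory Submission
  imports Defs
begin

text \<open>Fix a pair \<open>p\<close> in the representation of some element \<open>a\<close> and let \<open>W\<close> be the set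
  of elements whose representation contains \<open>p\<close>. By single-valuedness, a lower bound \<open>l\<close>
  of \<open>W\<close> missing \<open>p\<close> is disjoint from its restriction \<open>l \<triangleright> a\<close>, which lies in \<open>W\<close> and
  hence above \<open>l\<close>; so \<open>l = 0\<close>. If \<open>W\<close> had no least element, \<open>0\<close> would therefore be its
  meet, and meet completeness would put \<open>p\<close> into the empty function. The least element
  of \<open>W\<close> is an atom by the same restriction trick, and it separates \<open>a\<close> from \<open>b\<close> whenever
  \<open>p \<notin> \<theta> b\<close>.\<close>

lemma single_valued_subset_mem:
  assumes "single_valued g" "f \<subseteq> g" "(x, y) \<in> g" "x \<in> Domain f"
  shows "(x, y) \<in> f"
  using assms by (auto dest: single_valuedD)

lemma restrict_Domain_eq_iff_subset:
  assumes "single_valued g"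
  shows "{(x, y) \<in> g. x \<in> Domain f} = f \<longleftrightarrow> f \<subseteq> g"
proof
  assume eq: "{(x, y) \<in> g. x \<in> Domain f} = f"
  have "f \<subseteq> {(x, y) \<in> g. x \<in> Domain f}" using eq by (rule equalityD2)
  also have "\<dots> \<subseteq> g" by auto
  finally show "f \<subseteq> g" .
next
  assume sub: "f \<subseteq> g"
  show "{(x, y) \<in> g. x \<in> Domain f} = f"
  proof (intro equalityI subsetI)
    fix p assume "p \<in> {(x, y) \<in> g. x \<in> Domain f}"
    then obtain x y where "p = (x, y)" "(x, y) \<in> g" "x \<in> Domain f" by blast
    then show "p \<in> f" using single_valued_subset_mem[OF assms sub] by blast
  next
    fix p assume "p \<in> f"
    then show "p \<in> {(x, y) \<in> g. x \<in> Domain f}" using sub by force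
  qed
qed

lemma meet_completeD:
  assumes "meet_complete A \<theta>" "is_glb A S m" "S \<subseteq> carrier A" "s \<in> S"
  shows "\<theta> m = (\<Inter>c\<in>S. \<theta> c)"
  using assms unfolding meet_complete_def by blast

locale restriction_rep =
  fixes \<sigma> :: "opsym set" and A :: "'a salg" and X :: "'b set" and \<theta> :: "'a \<Rightarrow> ('b \<times> 'b) set"
  assumes ARestr_mem: "ARestr \<in> \<sigma>"
    and algebra: "sigma_algebra \<sigma> A"
    and rep: "pfun_rep \<sigma> A X \<theta>"
begin

lemma ar_closed: "a \<in> carrier A \<Longrightarrow> b \<in> carrier A \<Longrightarrow> ar A a b \<in> carrier A"
  using algebra ARestr_mem by (simp add: sigma_algebra_def)

lemma rep_ar:
  "a \<in> carrier A \<Longrightarrow> b \<in> carrier A \<Longrightarrow> \<theta> (ar A a b) = {(x, y) \<in> \<theta> b. x \<notin> Domain (\<theta> a)}"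
  using rep ARestr_mem by (simp add: pfun_rep_def pf_ar_def)

lemma single_valued_rep: "a \<in> carrier A \<Longrightarrow> single_valued (\<theta> a)"
  using rep by (simp add: pfun_rep_def is_pfun_on_def)

lemma rep_inj: "a \<in> carrier A \<Longrightarrow> b \<in> carrier A \<Longrightarrow> \<theta> a = \<theta> b \<Longrightarrow> a = b"
  using rep by (simp add: pfun_rep_def inj_on_def)

lemma alg_le_iff_subset:
  assumes a: "a \<in> carrier A" and b: "b \<in> carrier A"
  shows "alg_le A a b \<longleftrightarrow> \<theta> a \<subseteq> \<theta> b"
proof -
  have lhd: "alg_lhd A a b \<in> carrier A"
    unfolding alg_lhd_def using ar_closed[OF ar_closed[OF a b] b] .
  have "alg_le A a b \<longleftrightarrow> \<theta> (alg_lhd A a b) = \<theta> a"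
    unfolding alg_le_def using rep_inj[OF lhd a] by auto
  also have "\<theta> (alg_lhd A a b) = {(x, y) \<in> \<theta> b. x \<in> Domain (\<theta> a)}"
    unfolding alg_lhd_def rep_ar[OF ar_closed[OF a b] b] rep_ar[OF a b] by blast
  also have "\<dots> = \<theta> a \<longleftrightarrow> \<theta> a \<subseteq> \<theta> b"
    by (rule restrict_Domain_eq_iff_subset[OF single_valued_rep[OF b]])
  finally show ?thesis .
qed

lemma subset_rep_ar_empty:
  assumes "d \<in> carrier A" "e \<in> carrier A" "\<theta> d \<subseteq> \<theta> (ar A d e)"
  shows "\<theta> d = {}"
proof (rule ccontr)
  assume "\<theta> d \<noteq> {}"
  then obtain x y where xy: "(x, y) \<in> \<theta> d" by auto
  then have "(x, y) \<in> \<theta> (ar A d e)" using assms(3) by blast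
  then have "x \<notin> Domain (\<theta> d)" using rep_ar[OF assms(1,2)] by simp
  then show False using xy by blast
qed

context
  assumes nonempty: "carrier A \<noteq> {}"
begin

lemma zero_closed: "alg_zero A \<in> carrier A"
  unfolding alg_zero_def Let_def
  using ar_closed nonempty by (simp add: some_in_eq)

lemma rep_zero: "\<theta> (alg_zero A) = {}"
  unfolding alg_zero_def Let_def
  using rep_ar[of "SOME a. a \<in> carrier A"] nonempty by (simp add: some_in_eq Domain_iff)

lemma eq_zero_iff: "a \<in> carrier A \<Longrightarrow> a = alg_zero A \<longleftrightarrow> \<theta> a = {}"
  using rep_inj[OF _ zero_closed] rep_zero by blast

lemma zero_le: "a \<in> carrier A \<Longrightarrow> alg_le A (alg_zero A) a"
  using alg_le_iff_subset[OF zero_closed] rep_zero by simp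

end

definition witnesses :: "'b \<times> 'b \<Rightarrow> 'a set" where
  "witnesses p = {c \<in> carrier A. p \<in> \<theta> c}"

definition least_witness :: "'b \<times> 'b \<Rightarrow> 'a \<Rightarrow> bool" where
  "least_witness p l \<longleftrightarrow> l \<in> witnesses p \<and> (\<forall>c\<in>witnesses p. alg_le A l c)"

lemma lower_bound_missing_witness_empty:
  assumes l: "l \<in> carrier A" and lower: "\<forall>c\<in>witnesses p. alg_le A l c"
    and a: "a \<in> carrier A" and p: "p \<in> \<theta> a" and miss: "p \<notin> \<theta> l"
  shows "\<theta> l = {}"
proof -
  obtain x y where p_eq: "p = (x, y)" by fastforce
  have "a \<in> witnesses p" using a p unfolding witnesses_def by simp
  then have la: "\<theta> l \<subseteq> \<theta> a" using lower alg_le_iff_subset[OF l a] by simp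
  have "x \<notin> Domain (\<theta> l)"
    using single_valued_subset_mem[OF single_valued_rep[OF a] la] p miss p_eq by blast
  then have "ar A l a \<in> witnesses p"
    using p ar_closed[OF l a] rep_ar[OF l a] unfolding witnesses_def p_eq by simp
  then have "\<theta> l \<subseteq> \<theta> (ar A l a)"
    using lower alg_le_iff_subset[OF l ar_closed[OF l a]] by simp
  then show ?thesis by (rule subset_rep_ar_empty[OF l a])
qed

lemma least_witness_exists:
  assumes complete: "meet_complete A \<theta>" and a: "a \<in> carrier A" "p \<in> \<theta> a"
  shows "\<exists>l. least_witness p l"
proof (rule ccontr)
  assume no_least: "\<nexists>l. least_witness p l"
  have nonempty: "carrier A \<noteq> {}" using a by blast
  have a_wit: "a \<in> witnesses p" using a unfolding witnesses_def by simp
  have "is_glb A (witnesses p) (alg_zero A)"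
    unfolding is_glb_def
  proof (intro conjI ballI impI)
    show "alg_zero A \<in> carrier A" by (rule zero_closed[OF nonempty])
  next
    fix c assume "c \<in> witnesses p"
    then show "alg_le A (alg_zero A) c" using zero_le[OF nonempty] unfolding witnesses_def by blast
  next
    fix l assume l: "l \<in> carrier A" and lower: "\<forall>c\<in>witnesses p. alg_le A l c"
    have "p \<notin> \<theta> l"
    proof
      assume "p \<in> \<theta> l"
      then have "least_witness p l" using l lower unfolding least_witness_def witnesses_def by simp
      then show False using no_least by blast
    qed
    then have "\<theta> l = {}"
      using lower_bound_missing_witness_empty[OF l lower a] by simp
    then show "alg_le A l (alg_zero A)"
      using alg_le_iff_subset[OF l zero_closed[OF nonempty]] by simp
  qed
  moreover have "witnesses p \<subseteq> carrier A" unfolding witnesses_def by blast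
  ultimately have "\<theta> (alg_zero A) = (\<Inter>c\<in>witnesses p. \<theta> c)"
    by (rule meet_completeD[OF complete _ _ a_wit])
  then have "p \<in> \<theta> (alg_zero A)" unfolding witnesses_def by blast
  then show False using rep_zero[OF nonempty] by simp
qed

lemma least_witness_atom:
  assumes least: "least_witness (x, y) l"
  shows "is_atom A l"
proof -
  have l: "l \<in> carrier A" "(x, y) \<in> \<theta> l"
    and lower: "\<forall>c\<in>witnesses (x, y). alg_le A l c"
    using least unfolding least_witness_def witnesses_def by auto
  have nonempty: "carrier A \<noteq> {}" using l by blast
  have "d = alg_zero A \<or> d = l" if d: "d \<in> carrier A" "alg_le A d l" for d
  proof (cases "x \<in> Domain (\<theta> d)")
    case True
    have dl: "\<theta> d \<subseteq> \<theta> l" using d alg_le_iff_subset l by blast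
    then have "d \<in> witnesses (x, y)"
      using single_valued_subset_mem[OF single_valued_rep[OF l(1)] dl l(2) True] d
      unfolding witnesses_def by simp
    then have "\<theta> l \<subseteq> \<theta> d" using lower alg_le_iff_subset l d by blast
    then show ?thesis using dl rep_inj d l by blast
  next
    case False
    then have "ar A d l \<in> witnesses (x, y)"
      using l ar_closed[OF d(1)] rep_ar[OF d(1)] unfolding witnesses_def by simp
    then have "\<theta> l \<subseteq> \<theta> (ar A d l)"
      using lower alg_le_iff_subset l ar_closed[OF d(1) l(1)] by blast
    moreover have "\<theta> d \<subseteq> \<theta> l" using d alg_le_iff_subset l by blast
    ultimately have "\<theta> d = {}" using subset_rep_ar_empty d l by blast
    then show ?thesis using eq_zero_iff[OF nonempty d(1)] by simp
  qed
  moreover have "l \<noteq> alg_zero A" using l rep_zero[OF nonempty] by auto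
  ultimately show ?thesis unfolding is_atom_def using l by blast
qed

theorem atoms_separating:
  assumes complete: "meet_complete A \<theta>"
    and a: "a \<in> carrier A" and b: "b \<in> carrier A" and not_le: "\<not> alg_le A a b"
  shows "\<exists>c. is_atom A c \<and> alg_le A c a \<and> \<not> alg_le A c b"
proof -
  obtain x y where xy: "(x, y) \<in> \<theta> a" "(x, y) \<notin> \<theta> b"
    using not_le alg_le_iff_subset[OF a b] by auto
  obtain l where least: "least_witness (x, y) l"
    using least_witness_exists[OF complete a xy(1)] by blast
  then have l: "l \<in> carrier A" "(x, y) \<in> \<theta> l" "alg_le A l a"
    using a xy unfolding least_witness_def witnesses_def by auto
  moreover have "\<not> alg_le A l b" using l xy alg_le_iff_subset[OF l(1) b] by blast
  ultimately show ?thesis using least_witness_atom[OF least] by blast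
qed

end

theorem corollary4p5:
  fixes \<sigma> :: "opsym set" and A :: "'a salg" and X :: "'b set" and \<theta> :: "'a \<Rightarrow> ('b \<times> 'b) set"
  assumes "ARestr \<in> \<sigma>"
    and "sigma_algebra \<sigma> A"
    and "pfun_rep \<sigma> A X \<theta>"
    and "meet_complete A \<theta>"
  shows "(\<forall>a\<in>carrier A. \<forall>b\<in>carrier A. \<not> alg_le A a b \<longrightarrow>
            (\<exists>c. is_atom A c \<and> alg_le A c a \<and> \<not> alg_le A c b))
       \<and> (\<forall>a\<in>carrier A. a \<noteq> alg_zero A \<longrightarrow> (\<exists>c. is_atom A c \<and> alg_le A c a))"
proof -
  interpret restriction_rep \<sigma> A X \<theta> using assms(1-3) by unfold_locales
  have "\<not> alg_le A a (alg_zero A)" if "a \<in> carrier A" "a \<noteq> alg_zero A" for a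
    using that alg_le_iff_subset zero_closed rep_zero eq_zero_iff by blast
  then show ?thesis
    using atoms_separating[OF assms(4)] zero_closed by blast
qed

end
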